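(* Let $X$ be the vertex set of a dual polar graph of diameter $d$ with distance $\partial$ and base vertex $u_0\in X$. Let $x,y\in X$, $U=x\cap y$, $\ell=\dim(u_0\cap U)$, and $X'=\{z\in X: U\subseteq z\}$. Then the pointwise product satisfies \[ f_xf_y=\sum_{\substack{z\in X'\\ f_x(z)=f_y(z)=1}} f_z\ \in\ \mathrm{Hom}_{d-\ell}(X). \]
   Context: Let $V$ be a finite-dimensional vector space over a finite field with a non-degenerate alternating, Hermitian, or quadratic form of Witt index $d$; $X$ is the set of maximal totally isotropic subspaces (dimension $d$), adjacent iff their intersection has dimension $d-1$, with distance $\partial(x,y)=d-\dim(x\cap y)$. Shells: $X_j=\{z\in X:\partial(u_0,z)=j\}$. For $z\in X$, $f_z:X\to\mathbb{R}$ is defined by $f_z(w)=1$ if $\partial(u_0,z)+\partial(z,w)=\partial(u_0,w)$ and $f_z(w)=0$ otherwise. $\mathrm{Hom}_j(X)=\mathrm{span}\{f_z : z\in X_j\}$. *)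

theory Defs
  imports "HOL-Analysis.Analysis"
begin

definition field_involution :: "('a::field \<Rightarrow> 'a) \<Rightarrow> bool" where
  "field_involution \<sigma> \<longleftrightarrow>
     (\<forall>x y. \<sigma> (x + y) = \<sigma> x + \<sigma> y) \<and> (\<forall>x y. \<sigma> (x * y) = \<sigma> x * \<sigma> y) \<and>
     (\<forall>x. \<sigma> (\<sigma> x) = x) \<and> \<sigma> \<noteq> id"

definition alternating_form :: "('a::field ^ 'n \<Rightarrow> 'a ^ 'n \<Rightarrow> 'a) \<Rightarrow> bool" where
  "alternating_form B \<longleftrightarrow>
     (\<forall>x y z. B (x + y) z = B x z + B y z) \<and> (\<forall>c x y. B (c *s x) y = c * B x y) \<and>
     (\<forall>x y z. B x (y + z) = B x y + B x z) \<and> (\<forall>c x y. B x (c *s y) = c * B x y) \<and>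
     (\<forall>x. B x x = 0) \<and>
     (\<forall>x. (\<forall>y. B x y = 0) \<longrightarrow> x = 0)"

definition hermitian_form :: "('a::field \<Rightarrow> 'a) \<Rightarrow> ('a ^ 'n \<Rightarrow> 'a ^ 'n \<Rightarrow> 'a) \<Rightarrow> bool" where
  "hermitian_form \<sigma> B \<longleftrightarrow> field_involution \<sigma> \<and>
     (\<forall>x y z. B (x + y) z = B x z + B y z) \<and> (\<forall>c x y. B (c *s x) y = c * B x y) \<and>
     (\<forall>x y. B y x = \<sigma> (B x y)) \<and>
     (\<forall>x. (\<forall>y. B x y = 0) \<longrightarrow> x = 0)"

definition quadratic_form :: "('a::field ^ 'n \<Rightarrow> 'a) \<Rightarrow> bool" where
  "quadratic_form Q \<longleftrightarrow>
     (\<forall>c x. Q (c *s x) = c ^ 2 * Q x) \<and>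
     (let B = (\<lambda>x y. Q (x + y) - Q x - Q y) in
        (\<forall>x y z. B (x + y) z = B x z + B y z) \<and> (\<forall>c x y. B (c *s x) y = c * B x y) \<and>
        (\<forall>x y z. B x (y + z) = B x y + B x z) \<and> (\<forall>c x y. B x (c *s y) = c * B x y) \<and>
        (\<forall>x. Q x = 0 \<and> (\<forall>y. B x y = 0) \<longrightarrow> x = 0))"

text \<open>A predicate TI on subsets of V is the "totally isotropic" predicate of a
non-degenerate alternating, Hermitian or quadratic form.\<close>
definition polar_isotropy :: "(('a::field ^ 'n) set \<Rightarrow> bool) \<Rightarrow> bool" where
  "polar_isotropy TI \<longleftrightarrow>
     (\<exists>B. alternating_form B \<and> TI = (\<lambda>W. \<forall>x\<in>W. \<forall>y\<in>W. B x y = 0)) \<or>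
     (\<exists>\<sigma> B. hermitian_form \<sigma> B \<and> TI = (\<lambda>W. \<forall>x\<in>W. \<forall>y\<in>W. B x y = 0)) \<or>
     (\<exists>Q. quadratic_form Q \<and> TI = (\<lambda>W. \<forall>x\<in>W. Q x = 0))"

definition ti_subspaces :: "(('a::field ^ 'n) set \<Rightarrow> bool) \<Rightarrow> ('a ^ 'n) set set" where
  "ti_subspaces TI = {W. vec.subspace W \<and> TI W}"

definition witt_index :: "(('a::field ^ 'n) set \<Rightarrow> bool) \<Rightarrow> nat" where
  "witt_index TI = Max (vec.dim ` ti_subspaces TI)"

definition dpX :: "(('a::field ^ 'n) set \<Rightarrow> bool) \<Rightarrow> ('a ^ 'n) set set" where
  "dpX TI = {W \<in> ti_subspaces TI. vec.dim W = witt_index TI}"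

definition dpdist :: "(('a::field ^ 'n) set \<Rightarrow> bool) \<Rightarrow> ('a ^ 'n) set \<Rightarrow> ('a ^ 'n) set \<Rightarrow> nat" where
  "dpdist TI x y = witt_index TI - vec.dim (x \<inter> y)"

definition dpshell :: "(('a::field ^ 'n) set \<Rightarrow> bool) \<Rightarrow> ('a ^ 'n) set \<Rightarrow> nat \<Rightarrow> ('a ^ 'n) set set" where
  "dpshell TI u0 j = {z \<in> dpX TI. dpdist TI u0 z = j}"

definition dpf :: "(('a::field ^ 'n) set \<Rightarrow> bool) \<Rightarrow> ('a ^ 'n) set \<Rightarrow> ('a ^ 'n) set \<Rightarrow> ('a ^ 'n) set \<Rightarrow> real" where
  "dpf TI u0 z w = (if dpdist TI u0 z + dpdist TI z w = dpdist TI u0 w then 1 else 0)"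

text \<open>Hom_j(X): the real span of the f_z (z in X_j), as functions on X
(X is finite, so the span is the set of finite linear combinations over X_j;
functions are compared on X only).\<close>
definition dpHom :: "(('a::field ^ 'n) set \<Rightarrow> bool) \<Rightarrow> ('a ^ 'n) set \<Rightarrow> nat \<Rightarrow> (('a ^ 'n) set \<Rightarrow> real) set" where
  "dpHom TI u0 j = {g. \<exists>c. \<forall>w \<in> dpX TI. g w = (\<Sum>z \<in> dpshell TI u0 j. c z * dpf TI u0 z w)}"

end

theory Submission
  imports Defs
begin

text \<open>
  Say that \<open>z\<close> lies between \<open>u\<close> and \<open>w\<close> if \<open>\<partial>(u,z) + \<partial>(z,w) = \<partial>(u,w)\<close>, so that
  \<open>f\<^sub>z(w) = 1\<close> iff \<open>z\<close> lies between \<open>u\<^sub>0\<close> and \<open>w\<close>.  By the modular law, this holds iff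
  \<open>u \<inter> w \<subseteq> z\<close> and \<open>z = (u \<inter> z) + (z \<inter> w)\<close>, and betweenness is transitive.  Fix \<open>w\<close>.  If
  \<open>x\<close> or \<open>y\<close> is not between \<open>u\<^sub>0\<close> and \<open>w\<close>, transitivity shows that no \<open>z\<close> indexing the sum
  is either.  If both are, put \<open>A = u\<^sub>0 \<inter> x \<inter> y\<close>: the maximal totally isotropic subspace
  \<open>A + (w \<inter> A\<^sup>\<perp>)\<close> is the unique such \<open>z\<close> between \<open>u\<^sub>0\<close> and \<open>w\<close>.  So both sides are the
  indicator of the same event.  Every \<open>z\<close> indexing the sum has \<open>u\<^sub>0 \<inter> z = A\<close>, so it lies in
  the shell \<open>X\<^sub>d\<^sub>-\<^sub>\<ell>\<close>.
\<close>

lemma set_plus_eq_sums: "A + B = {x + y |x y. x \<in> A \<and> y \<in> B}"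
  by (auto simp: set_plus_def)

lemma subspace_set_plus:
  fixes A B :: "('a::field ^ 'n::finite) set"
  shows "vec.subspace A \<Longrightarrow> vec.subspace B \<Longrightarrow> vec.subspace (A + B)"
  unfolding set_plus_eq_sums by (rule vec.subspace_sums)

lemma dim_set_plus_Int:
  fixes A B :: "('a::field ^ 'n::finite) set"
  shows "vec.subspace A \<Longrightarrow> vec.subspace B \<Longrightarrow>
    vec.dim (A + B) + vec.dim (A \<inter> B) = vec.dim A + vec.dim B"
  unfolding set_plus_eq_sums by (rule vec.dim_sums_Int)

lemma set_plus_subset_subspace:
  fixes A B C :: "('a::field ^ 'n::finite) set"
  shows "vec.subspace C \<Longrightarrow> A \<subseteq> C \<Longrightarrow> B \<subseteq> C \<Longrightarrow> A + B \<subseteq> C"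
  by (auto simp: set_plus_def intro: vec.subspace_add)

lemma subset_set_plus_left:
  fixes A B :: "'a::monoid_add set"
  shows "0 \<in> B \<Longrightarrow> A \<subseteq> A + B"
  using set_plus_intro[of _ A 0 B] by auto

lemma subset_set_plus_right:
  fixes A B :: "'a::monoid_add set"
  shows "0 \<in> A \<Longrightarrow> B \<subseteq> A + B"
  using set_plus_intro[of 0 A _ B] by auto

lemma dim_Int_add_dim_Int:
  fixes p q r :: "('a::field ^ 'n::finite) set"
  assumes p: "vec.subspace p" and q: "vec.subspace q" and r: "vec.subspace r"
  shows "vec.dim (p \<inter> q) + vec.dim (q \<inter> r) \<le> vec.dim q + vec.dim (p \<inter> r)"
    and "vec.dim (p \<inter> q) + vec.dim (q \<inter> r) = vec.dim q + vec.dim (p \<inter> r) \<longleftrightarrow>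
         p \<inter> r \<subseteq> q \<and> q = (p \<inter> q) + (q \<inter> r)"
proof -
  let ?M = "(p \<inter> q) + (q \<inter> r)"
  have pq: "vec.subspace (p \<inter> q)" and qr: "vec.subspace (q \<inter> r)"
    and pr: "vec.subspace (p \<inter> r)" and pqr: "vec.subspace (p \<inter> q \<inter> r)"
    using p q r by (auto intro: vec.subspace_inter)
  have M: "vec.subspace ?M" by (rule subspace_set_plus[OF pq qr])
  have Mq: "?M \<subseteq> q" by (rule set_plus_subset_subspace[OF q]) auto
  have modular: "vec.dim ?M + vec.dim (p \<inter> q \<inter> r) = vec.dim (p \<inter> q) + vec.dim (q \<inter> r)"
    using dim_set_plus_Int[OF pq qr] by (simp add: Int_assoc Int_left_commute)
  have dim_M: "vec.dim ?M \<le> vec.dim q" by (rule vec.dim_subset[OF Mq])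
  have dim_pqr: "vec.dim (p \<inter> q \<inter> r) \<le> vec.dim (p \<inter> r)" by (rule vec.dim_subset) auto
  show "vec.dim (p \<inter> q) + vec.dim (q \<inter> r) \<le> vec.dim q + vec.dim (p \<inter> r)"
    using modular dim_M dim_pqr by linarith
  have M_eq: "vec.dim ?M = vec.dim q \<longleftrightarrow> q = ?M"
    using vec.subspace_dim_equal[OF M q Mq] by auto
  have pqr_eq: "vec.dim (p \<inter> q \<inter> r) = vec.dim (p \<inter> r) \<longleftrightarrow> p \<inter> r \<subseteq> q"
  proof
    assume "vec.dim (p \<inter> q \<inter> r) = vec.dim (p \<inter> r)"
    then have "p \<inter> q \<inter> r = p \<inter> r" by (intro vec.subspace_dim_equal[OF pqr pr]) auto
    then show "p \<inter> r \<subseteq> q" by blast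
  next
    assume "p \<inter> r \<subseteq> q"
    then have "p \<inter> q \<inter> r = p \<inter> r" by blast
    then show "vec.dim (p \<inter> q \<inter> r) = vec.dim (p \<inter> r)" by simp
  qed
  show "vec.dim (p \<inter> q) + vec.dim (q \<inter> r) = vec.dim q + vec.dim (p \<inter> r) \<longleftrightarrow>
      p \<inter> r \<subseteq> q \<and> q = ?M"
    using modular dim_M dim_pqr M_eq pqr_eq by linarith
qed


section \<open>Distances in the dual polar graph\<close>

lemma dpXD:
  assumes "z \<in> dpX TI"
  shows "vec.subspace z" "TI z" "vec.dim z = witt_index TI"
  using assms unfolding dpX_def ti_subspaces_def by auto

lemma dim_le_witt_index:
  fixes TI :: "('a::field ^ 'n::finite) set \<Rightarrow> bool"
  assumes "vec.subspace W" "TI W"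
  shows "vec.dim W \<le> witt_index TI"
proof -
  have "vec.dim ` ti_subspaces TI \<subseteq> {..vec.dim (UNIV :: ('a ^ 'n) set)}"
    by (auto simp del: vec.dim_UNIV intro: vec.dim_subset)
  then have "finite (vec.dim ` ti_subspaces TI)" by (rule finite_subset) simp
  moreover have "vec.dim W \<in> vec.dim ` ti_subspaces TI"
    using assms unfolding ti_subspaces_def by auto
  ultimately show ?thesis unfolding witt_index_def by (rule Max_ge)
qed

definition dpbetween :: "(('a::field ^ 'n) set \<Rightarrow> bool) \<Rightarrow> ('a ^ 'n) set \<Rightarrow> ('a ^ 'n) set \<Rightarrow>
    ('a ^ 'n) set \<Rightarrow> bool" where
  "dpbetween TI u z w \<longleftrightarrow> dpdist TI u z + dpdist TI z w = dpdist TI u w"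

lemma dpf_eq_of_bool: "dpf TI u z w = of_bool (dpbetween TI u z w)"
  unfolding dpf_def dpbetween_def by simp

lemma dpf_eq_1_iff: "dpf TI u z w = 1 \<longleftrightarrow> dpbetween TI u z w"
  unfolding dpf_eq_of_bool by simp

lemma dpdist_triangle:
  assumes "p \<in> dpX TI" "q \<in> dpX TI" "r \<in> dpX TI"
  shows "dpdist TI p r \<le> dpdist TI p q + dpdist TI q r"
  using dim_Int_add_dim_Int(1)[OF dpXD(1)[OF assms(1)] dpXD(1)[OF assms(2)] dpXD(1)[OF assms(3)]]
    dpXD(3)[OF assms(2)] vec.dim_subset[of "p \<inter> r" p, OF Int_lower1] dpXD(3)[OF assms(1)]
  unfolding dpdist_def by linarith

lemma dpbetween_iff:
  assumes "p \<in> dpX TI" "q \<in> dpX TI" "r \<in> dpX TI"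
  shows "dpbetween TI p q r \<longleftrightarrow> p \<inter> r \<subseteq> q \<and> q = (p \<inter> q) + (q \<inter> r)"
proof -
  note dims = dpXD(3)[OF assms(1)] dpXD(3)[OF assms(2)]
    vec.dim_subset[of "p \<inter> q" p, OF Int_lower1] vec.dim_subset[of "q \<inter> r" q, OF Int_lower1]
    vec.dim_subset[of "p \<inter> r" p, OF Int_lower1]
  have "dpbetween TI p q r \<longleftrightarrow>
      vec.dim (p \<inter> q) + vec.dim (q \<inter> r) = vec.dim q + vec.dim (p \<inter> r)"
    unfolding dpbetween_def dpdist_def using dims by linarith
  also have "\<dots> \<longleftrightarrow> p \<inter> r \<subseteq> q \<and> q = (p \<inter> q) + (q \<inter> r)"
    by (rule dim_Int_add_dim_Int(2)[OF dpXD(1)[OF assms(1)] dpXD(1)[OF assms(2)] dpXD(1)[OF assms(3)]])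
  finally show ?thesis .
qed

lemma dpbetweenD:
  assumes "p \<in> dpX TI" "q \<in> dpX TI" "r \<in> dpX TI" "dpbetween TI p q r"
  shows "p \<inter> r \<subseteq> q" "q = (p \<inter> q) + (q \<inter> r)"
  using assms(4) unfolding dpbetween_iff[OF assms(1-3)] by (rule conjunct1, rule conjunct2)

lemma dpbetweenI:
  assumes "p \<in> dpX TI" "q \<in> dpX TI" "r \<in> dpX TI"
    and "p \<inter> r \<subseteq> q" "q = (p \<inter> q) + (q \<inter> r)"
  shows "dpbetween TI p q r"
  unfolding dpbetween_iff[OF assms(1-3)] using assms(4,5) by (rule conjI)

lemma dpbetween_trans:
  assumes "u \<in> dpX TI" "x \<in> dpX TI" "z \<in> dpX TI" "w \<in> dpX TI"
    and "dpbetween TI u x z" "dpbetween TI u z w"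
  shows "dpbetween TI u x w"
  using assms(5,6) dpdist_triangle[OF assms(2,3,4)] dpdist_triangle[OF assms(1,2,4)]
  unfolding dpbetween_def by linarith

lemma dpdist_if_dpbetween_both:
  assumes "u \<in> dpX TI" "x \<in> dpX TI" "y \<in> dpX TI" "z \<in> dpX TI"
    and "x \<inter> y \<subseteq> z" "dpbetween TI u x z" "dpbetween TI u y z"
  shows "dpdist TI u z = witt_index TI - vec.dim (u \<inter> (x \<inter> y))"
proof -
  have "u \<inter> z \<subseteq> x" "u \<inter> z \<subseteq> y"
    using dpbetweenD(1)[OF assms(1,2,4,6)] dpbetweenD(1)[OF assms(1,3,4,7)] .
  with assms(5) have "u \<inter> z = u \<inter> (x \<inter> y)" by auto
  then show ?thesis unfolding dpdist_def by simp
qed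

lemma dpf_both_subset_dpshell:
  assumes "u \<in> dpX TI" "x \<in> dpX TI" "y \<in> dpX TI"
  shows "{z \<in> dpX TI. x \<inter> y \<subseteq> z \<and> dpf TI u x z = 1 \<and> dpf TI u y z = 1}
    \<subseteq> dpshell TI u (witt_index TI - vec.dim (u \<inter> (x \<inter> y)))"
proof
  fix z assume "z \<in> {z \<in> dpX TI. x \<inter> y \<subseteq> z \<and> dpf TI u x z = 1 \<and> dpf TI u y z = 1}"
  then have "z \<in> dpX TI" "x \<inter> y \<subseteq> z" "dpbetween TI u x z" "dpbetween TI u y z"
    by (simp_all add: dpf_eq_1_iff)
  then show "z \<in> dpshell TI u (witt_index TI - vec.dim (u \<inter> (x \<inter> y)))"
    unfolding dpshell_def using dpdist_if_dpbetween_both[OF assms] by blast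
qed

lemma sum_dpf_in_dpHom:
  assumes "finite (dpX TI)" "S \<subseteq> dpshell TI u j"
    and "\<forall>w \<in> dpX TI. g w = (\<Sum>z\<in>S. dpf TI u z w)"
  shows "g \<in> dpHom TI u j"
  unfolding dpHom_def
proof (intro CollectI exI[of _ "\<lambda>z. of_bool (z \<in> S)"] ballI)
  fix w assume "w \<in> dpX TI"
  have "finite (dpshell TI u j)"
    using assms(1) by (rule finite_subset[rotated]) (auto simp: dpshell_def)
  then have "(\<Sum>z\<in>dpshell TI u j. of_bool (z \<in> S) * dpf TI u z w) = (\<Sum>z\<in>S. dpf TI u z w)"
    using assms(2) by (rule sum.mono_neutral_cong_right) auto
  with assms(3) \<open>w \<in> dpX TI\<close>
  show "g w = (\<Sum>z\<in>dpshell TI u j. of_bool (z \<in> S) * dpf TI u z w)" by simp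
qed


section \<open>Polar spaces\<close>

text \<open>\<open>P\<close> is the form, or the polarisation of a quadratic form.\<close>

locale polar_space =
  fixes TI :: "('a::field ^ 'n::finite) set \<Rightarrow> bool"
    and P :: "'a ^ 'n \<Rightarrow> 'a ^ 'n \<Rightarrow> 'a"
  assumes P_add_left: "P (x + y) z = P x z + P y z"
    and P_scale_left: "P (c *s x) y = c * P x y"
    and P_eq_0_commute: "P x y = 0 \<longleftrightarrow> P y x = 0"
    and TI_orthogonal: "vec.subspace W \<Longrightarrow> TI W \<Longrightarrow> x \<in> W \<Longrightarrow> y \<in> W \<Longrightarrow> P x y = 0"
    and TI_subset: "W \<subseteq> V \<Longrightarrow> TI V \<Longrightarrow> TI W"
    and TI_set_plus: "TI A \<Longrightarrow> TI B \<Longrightarrow> \<forall>a\<in>A. \<forall>b\<in>B. P a b = 0 \<Longrightarrow> TI (A + B)"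

lemma polar_space_alternating:
  assumes "alternating_form B"
  shows "polar_space (\<lambda>W. \<forall>x\<in>W. \<forall>y\<in>W. B x y = 0) B"
proof -
  have add: "B (x + y) z = B x z + B y z" "B x (y + z) = B x y + B x z"
    and scale: "B (c *s x) y = c * B x y" and alt: "B x x = 0" for x y z c
    using assms unfolding alternating_form_def by meson+
  have skew: "B x y + B y x = 0" for x y
  proof -
    have "B (x + y) (x + y) = B x x + B x y + (B y x + B y y)" by (simp add: add)
    then show ?thesis by (simp add: alt)
  qed
  have orth_commute: "B x y = 0 \<longleftrightarrow> B y x = 0" for x y
    using skew[of x y] by auto
  show ?thesis
  proof unfold_locales
    show "\<forall>s\<in>A + C. \<forall>t\<in>A + C. B s t = 0"
      if "\<forall>x\<in>A. \<forall>y\<in>A. B x y = 0" "\<forall>x\<in>C. \<forall>y\<in>C. B x y = 0"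
        "\<forall>a\<in>A. \<forall>c\<in>C. B a c = 0" for A C
    proof (intro ballI)
      fix s t assume "s \<in> A + C" "t \<in> A + C"
      then obtain a c a' c' where "s = a + c" "t = a' + c'" "a \<in> A" "c \<in> C" "a' \<in> A" "c' \<in> C"
        by (auto elim!: set_plus_elim)
      then show "B s t = 0" using that orth_commute[of c a'] by (simp add: add)
    qed
  next
    show "B (x + y) z = B x z + B y z" "B (c *s x) y = c * B x y" "B x y = 0 \<longleftrightarrow> B y x = 0"
      for x y z c by (fact add scale orth_commute)+
  qed blast+
qed

lemma polar_space_hermitian:
  assumes "hermitian_form \<sigma> B"
  shows "polar_space (\<lambda>W. \<forall>x\<in>W. \<forall>y\<in>W. B x y = 0) B"
proof -
  have \<sigma>_add: "\<sigma> (a + b) = \<sigma> a + \<sigma> b" and \<sigma>\<sigma>: "\<sigma> (\<sigma> a) = a" for a b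
    using assms unfolding hermitian_form_def field_involution_def by meson+
  have \<sigma>_0: "\<sigma> 0 = 0" using \<sigma>_add[of 0 0] by (metis add_cancel_right_right)
  have add: "B (x + y) z = B x z + B y z" and scale: "B (c *s x) y = c * B x y"
    and conj: "B y x = \<sigma> (B x y)" for x y z c
    using assms unfolding hermitian_form_def by meson+
  have add_right: "B x (y + z) = B x y + B x z" for x y z
  proof -
    have "B x (y + z) = \<sigma> (B y x) + \<sigma> (B z x)" by (simp add: conj[of x "y + z"] add \<sigma>_add)
    then show ?thesis by (simp only: conj[of x y, symmetric] conj[of x z, symmetric])
  qed
  have orth_commute: "B x y = 0 \<longleftrightarrow> B y x = 0" for x y
    using conj[of x y] conj[of y x] \<sigma>_0 by auto
  show ?thesis
  proof unfold_locales
    show "\<forall>s\<in>A + C. \<forall>t\<in>A + C. B s t = 0"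
      if "\<forall>x\<in>A. \<forall>y\<in>A. B x y = 0" "\<forall>x\<in>C. \<forall>y\<in>C. B x y = 0"
        "\<forall>a\<in>A. \<forall>c\<in>C. B a c = 0" for A C
    proof (intro ballI)
      fix s t assume "s \<in> A + C" "t \<in> A + C"
      then obtain a c a' c' where "s = a + c" "t = a' + c'" "a \<in> A" "c \<in> C" "a' \<in> A" "c' \<in> C"
        by (auto elim!: set_plus_elim)
      then show "B s t = 0" using that orth_commute[of c a'] by (simp add: add add_right)
    qed
  next
    show "B (x + y) z = B x z + B y z" "B (c *s x) y = c * B x y" "B x y = 0 \<longleftrightarrow> B y x = 0"
      for x y z c by (fact add scale orth_commute)+
  qed blast+
qed

lemma polar_space_quadratic:
  assumes "quadratic_form Q"
  shows "polar_space (\<lambda>W. \<forall>x\<in>W. Q x = 0) (\<lambda>x y. Q (x + y) - Q x - Q y)"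
proof unfold_locales
  note polar_bilinear = assms[unfolded quadratic_form_def Let_def, THEN conjunct2]
  show "Q (x + y + z) - Q (x + y) - Q z = (Q (x + z) - Q x - Q z) + (Q (y + z) - Q y - Q z)"
    for x y z using polar_bilinear[THEN conjunct1] by blast
  show "Q (c *s x + y) - Q (c *s x) - Q y = c * (Q (x + y) - Q x - Q y)"
    for c x y using polar_bilinear[THEN conjunct2, THEN conjunct1] by blast
  show "Q (x + y) - Q x - Q y = 0 \<longleftrightarrow> Q (y + x) - Q y - Q x = 0" for x y
    by (simp add: algebra_simps)
  show "Q (x + y) - Q x - Q y = 0" if "vec.subspace W" "\<forall>x\<in>W. Q x = 0" "x \<in> W" "y \<in> W" for W x y
    using that by (simp add: vec.subspace_add)
  show "\<forall>x\<in>W. Q x = 0" if "W \<subseteq> V" "\<forall>x\<in>V. Q x = 0" for W V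
    using that by blast
  show "\<forall>s\<in>A + C. Q s = 0"
    if "\<forall>x\<in>A. Q x = 0" "\<forall>x\<in>C. Q x = 0" "\<forall>a\<in>A. \<forall>c\<in>C. Q (a + c) - Q a - Q c = 0" for A C
  proof
    fix s assume "s \<in> A + C"
    then obtain a c where "s = a + c" "a \<in> A" "c \<in> C" by (auto elim!: set_plus_elim)
    with that show "Q s = 0" by force
  qed
qed

lemma polar_isotropy_polar_space: "polar_isotropy TI \<Longrightarrow> \<exists>P. polar_space TI P"
  unfolding polar_isotropy_def
  using polar_space_alternating polar_space_hermitian polar_space_quadratic by blast

context polar_space
begin

definition perp :: "('a ^ 'n) set \<Rightarrow> ('a ^ 'n) set" where
  "perp C = {v. \<forall>c\<in>C. P v c = 0}"

lemma P_zero_left: "P 0 c = 0"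
  using P_scale_left[of 0 0 c] by simp

lemma subspace_perp: "vec.subspace (perp C)"
  unfolding vec.subspace_def perp_def by (auto simp: P_add_left P_scale_left P_zero_left)

lemma perp_span: "perp (vec.span C) = perp C"
proof
  show "perp (vec.span C) \<subseteq> perp C"
    unfolding perp_def using vec.span_superset by blast
  show "perp C \<subseteq> perp (vec.span C)"
  proof
    fix v assume v: "v \<in> perp C"
    have "vec.subspace {a. P a v = 0}"
      unfolding vec.subspace_def by (auto simp: P_add_left P_scale_left P_zero_left)
    moreover have "C \<subseteq> {a. P a v = 0}"
      using v P_eq_0_commute unfolding perp_def by auto
    ultimately have "vec.span C \<subseteq> {a. P a v = 0}" by (rule vec.span_minimal[rotated])
    then show "v \<in> perp (vec.span C)"
      using P_eq_0_commute unfolding perp_def by auto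
  qed
qed

lemma perp_antimono: "A \<subseteq> C \<Longrightarrow> perp C \<subseteq> perp A"
  unfolding perp_def by blast

lemma isotropic_subset_perp:
  assumes "vec.subspace W" "TI W" "A \<subseteq> W"
  shows "W \<subseteq> perp A"
  using TI_orthogonal[OF assms(1,2)] assms(3) unfolding perp_def by blast

lemma dim_le_dim_Int_perp_singleton:
  assumes T: "vec.subspace T"
  shows "vec.dim T \<le> vec.dim (T \<inter> perp {c}) + 1"
proof (cases "T \<subseteq> perp {c}")
  case True
  then show ?thesis by (simp add: Int_absorb2)
next
  case False
  then obtain s where s: "s \<in> T" "P s c \<noteq> 0" unfolding perp_def by auto
  let ?H = "T \<inter> perp {c}"
  have "T \<subseteq> vec.span (insert s ?H)"
  proof
    fix v assume v: "v \<in> T"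
    define k where "k = P v c / P s c"
    have "P (v + (-k) *s s) c = P v c + (-k) * P s c" by (simp only: P_add_left P_scale_left)
    then have "P (v + (-k) *s s) c = 0" using s(2) by (simp add: k_def)
    moreover have "v + (-k) *s s \<in> T"
      by (intro vec.subspace_add[OF T v] vec.subspace_scale[OF T s(1)])
    ultimately have "v + (-k) *s s \<in> ?H" unfolding perp_def by simp
    moreover have "v = (v + (-k) *s s) + k *s s" by (simp add: vec_eq_iff algebra_simps)
    ultimately show "v \<in> vec.span (insert s ?H)"
      by (metis insertI1 insertI2 vec.span_add vec.span_base vec.span_scale)
  qed
  then have "vec.dim T \<le> vec.dim (insert s ?H)" by (rule vec.dim_mono)
  also have "\<dots> \<le> vec.dim ?H + 1" by (simp add: vec.dim_insert)
  finally show ?thesis .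
qed

lemma dim_le_dim_Int_perp:
  assumes "finite C" "vec.subspace T"
  shows "vec.dim T \<le> vec.dim (T \<inter> perp C) + card C"
  using assms(1)
proof (induction C rule: finite_induct)
  case empty
  then show ?case by (simp add: perp_def)
next
  case (insert c C)
  have "vec.subspace (T \<inter> perp C)"
    using assms(2) subspace_perp by (rule vec.subspace_inter)
  then have "vec.dim (T \<inter> perp C) \<le> vec.dim (T \<inter> perp C \<inter> perp {c}) + 1"
    by (rule dim_le_dim_Int_perp_singleton)
  moreover have "T \<inter> perp C \<inter> perp {c} = T \<inter> perp (insert c C)"
    unfolding perp_def by auto
  ultimately show ?case using insert by simp
qed

text \<open>Extend a basis of \<open>A \<inter> w\<close> to a basis of \<open>A\<close>; since \<open>w\<close> is totally isotropic, only
  the new basis vectors impose conditions on \<open>w \<inter> A\<^sup>\<perp>\<close>.\<close>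

lemma dim_le_dim_Int_perp_isotropic:
  assumes w: "vec.subspace w" "TI w" and A: "vec.subspace A"
  shows "vec.dim w + vec.dim (A \<inter> w) \<le> vec.dim (w \<inter> perp A) + vec.dim A"
proof -
  obtain B0 where B0: "B0 \<subseteq> A \<inter> w" "vec.independent B0" "A \<inter> w \<subseteq> vec.span B0"
      "card B0 = vec.dim (A \<inter> w)"
    using vec.basis_exists by blast
  obtain B where B: "B0 \<subseteq> B" "B \<subseteq> A" "vec.independent B" "A \<subseteq> vec.span B"
    using vec.maximal_independent_subset_extend[of B0 A] B0(1,2) by blast
  have "finite B" using vec.finiteI_independent[OF B(3)] .
  moreover have "card B = vec.dim A" using vec.basis_card_eq_dim[OF B(2,4,3)] .
  ultimately have card_C: "card (B - B0) = vec.dim A - vec.dim (A \<inter> w)"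
    using B0(4) B(1) by (simp add: card_Diff_subset finite_subset)
  have "w \<subseteq> perp B0"
    using isotropic_subset_perp[OF w] B0(1) by blast
  then have "w \<inter> perp (B - B0) \<subseteq> perp B"
    unfolding perp_def by blast
  also have "\<dots> \<subseteq> perp A"
    using perp_antimono[OF B(4)] by (simp add: perp_span)
  finally have sub: "w \<inter> perp (B - B0) \<subseteq> w \<inter> perp A" by blast
  have "vec.dim w \<le> vec.dim (w \<inter> perp (B - B0)) + card (B - B0)"
    using \<open>finite B\<close> w(1) by (intro dim_le_dim_Int_perp) auto
  also have "\<dots> \<le> vec.dim (w \<inter> perp A) + card (B - B0)"
    using vec.dim_subset[OF sub] by simp
  finally show ?thesis
    using card_C vec.dim_subset[of "A \<inter> w" A] by auto
qed

text \<open>For totally isotropic \<open>A\<close>, \<open>proj A w\<close> is the maximal totally isotropic subspace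
  containing \<open>A\<close> that is nearest to \<open>w\<close>.\<close>

definition proj :: "('a ^ 'n) set \<Rightarrow> ('a ^ 'n) set \<Rightarrow> ('a ^ 'n) set" where
  "proj A w = A + (w \<inter> perp A)"

lemma proj_in_dpX:
  assumes A: "vec.subspace A" "TI A" and w: "w \<in> dpX TI"
  shows "proj A w \<in> dpX TI"
proof -
  note w' = dpXD[OF w]
  let ?D = "w \<inter> perp A"
  have D: "vec.subspace ?D" using w'(1) subspace_perp by (rule vec.subspace_inter)
  have sub: "vec.subspace (proj A w)" unfolding proj_def by (rule subspace_set_plus[OF A(1) D])
  have "TI (proj A w)" unfolding proj_def
  proof (rule TI_set_plus[OF A(2)])
    show "TI ?D" using TI_subset[OF _ w'(2)] by blast
    show "\<forall>a\<in>A. \<forall>d\<in>?D. P a d = 0" using P_eq_0_commute unfolding perp_def by blast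
  qed
  moreover have "witt_index TI \<le> vec.dim (proj A w)"
  proof -
    have "A \<inter> ?D = A \<inter> w" using isotropic_subset_perp[OF A order_refl] by blast
    then have "vec.dim (proj A w) + vec.dim (A \<inter> w) = vec.dim A + vec.dim ?D"
      using dim_set_plus_Int[OF A(1) D] unfolding proj_def by simp
    then show ?thesis
      using dim_le_dim_Int_perp_isotropic[OF w'(1,2) A(1)] w'(3) by linarith
  qed
  ultimately show ?thesis
    using sub dim_le_witt_index[OF sub] unfolding dpX_def ti_subspaces_def by fastforce
qed

lemma dpbetween_proj_left:
  assumes u: "u \<in> dpX TI" and x: "x \<in> dpX TI" and w: "w \<in> dpX TI"
    and between: "dpbetween TI u x w" and A: "vec.subspace A" "A \<subseteq> u \<inter> x"
  shows "dpbetween TI u x (proj A w)"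
proof -
  note u' = dpXD[OF u] and x' = dpXD[OF x]
  have "TI A" using TI_subset[OF _ u'(2)] A(2) by blast
  then have z: "proj A w \<in> dpX TI" by (rule proj_in_dpX[OF A(1) _ w])
  note uw = dpbetweenD(1)[OF u x w between] and x_eq = dpbetweenD(2)[OF u x w between]
  show ?thesis
  proof (rule dpbetweenI[OF u x z])
    show "u \<inter> proj A w \<subseteq> x"
    proof
      fix v assume v: "v \<in> u \<inter> proj A w"
      then obtain a b where ab: "v = a + b" "a \<in> A" "b \<in> w"
        unfolding proj_def by (auto elim!: set_plus_elim)
      then have "b \<in> u" using v A(2) vec.subspace_diff[OF u'(1), of v a] by auto
      then have "b \<in> x" using uw ab(3) by auto
      then show "v \<in> x" using ab A(2) vec.subspace_add[OF x'(1)] by auto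
    qed
    have "x \<inter> w \<subseteq> w \<inter> perp A" using isotropic_subset_perp[OF x'(1,2), of A] A(2) by blast
    also have "\<dots> \<subseteq> proj A w"
      unfolding proj_def by (rule subset_set_plus_right[OF vec.subspace_0[OF A(1)]])
    finally have "x \<inter> w \<subseteq> x \<inter> proj A w" by blast
    have "x \<subseteq> (u \<inter> x) + (x \<inter> w)" using x_eq by (rule equalityD1)
    also have "\<dots> \<subseteq> (u \<inter> x) + (x \<inter> proj A w)"
      using \<open>x \<inter> w \<subseteq> x \<inter> proj A w\<close> by (rule set_plus_mono2[OF order_refl])
    finally have "x \<subseteq> (u \<inter> x) + (x \<inter> proj A w)" .
    moreover have "(u \<inter> x) + (x \<inter> proj A w) \<subseteq> x"
      by (rule set_plus_subset_subspace[OF x'(1)]) auto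
    ultimately show "x = (u \<inter> x) + (x \<inter> proj A w)" by (rule antisym)
  qed
qed

lemma dpbetween_proj_right:
  assumes u: "u \<in> dpX TI" and w: "w \<in> dpX TI"
    and A: "vec.subspace A" "u \<inter> w \<subseteq> A" "A \<subseteq> u"
  shows "dpbetween TI u (proj A w) w"
proof -
  have "TI A" using TI_subset[OF A(3) dpXD(2)[OF u]] .
  then have z: "proj A w \<in> dpX TI" by (rule proj_in_dpX[OF A(1) _ w])
  have zero: "0 \<in> A" "0 \<in> w \<inter> perp A"
    using vec.subspace_0 A(1) dpXD(1)[OF w] subspace_perp by auto
  have A_sub: "A \<subseteq> proj A w" and D_sub: "w \<inter> perp A \<subseteq> proj A w"
    unfolding proj_def by (rule subset_set_plus_left[OF zero(2)] subset_set_plus_right[OF zero(1)])+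
  show ?thesis
  proof (rule dpbetweenI[OF u z w])
    show "u \<inter> w \<subseteq> proj A w" using A(2) A_sub by blast
    have "A + (w \<inter> perp A) \<subseteq> (u \<inter> proj A w) + (proj A w \<inter> w)"
      using A(3) A_sub D_sub by (intro set_plus_mono2) auto
    then have "proj A w \<subseteq> (u \<inter> proj A w) + (proj A w \<inter> w)" by (subst proj_def)
    moreover have "(u \<inter> proj A w) + (proj A w \<inter> w) \<subseteq> proj A w"
      by (rule set_plus_subset_subspace[OF dpXD(1)[OF z]]) auto
    ultimately show "proj A w = (u \<inter> proj A w) + (proj A w \<inter> w)" by (rule antisym)
  qed
qed

lemma Int_subset_proj:
  assumes u: "u \<in> dpX TI" and x: "x \<in> dpX TI" and y: "y \<in> dpX TI" and w: "w \<in> dpX TI"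
    and between: "dpbetween TI u x w" "dpbetween TI u y w"
  shows "x \<inter> y \<subseteq> proj (u \<inter> (x \<inter> y)) w"
proof
  note u' = dpXD[OF u] and x' = dpXD[OF x] and y' = dpXD[OF y] and w' = dpXD[OF w]
  fix v assume v: "v \<in> x \<inter> y"
  have "v \<in> (u \<inter> x) + (x \<inter> w)" using v dpbetweenD(2)[OF u x w between(1)] by blast
  then obtain a b where ab: "v = a + b" "a \<in> u \<inter> x" "b \<in> x \<inter> w" by (rule set_plus_elim)
  have "v \<in> (u \<inter> y) + (y \<inter> w)" using v dpbetweenD(2)[OF u y w between(2)] by blast
  then obtain a' b' where ab': "v = a' + b'" "a' \<in> u \<inter> y" "b' \<in> y \<inter> w" by (rule set_plus_elim)
  have "a - a' = b' - b" using ab(1) ab'(1) by (simp add: algebra_simps)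
  then have "a - a' \<in> u \<inter> w"
    using vec.subspace_diff[OF u'(1), of a a'] vec.subspace_diff[OF w'(1), of b' b] ab ab' by auto
  then have "a' + (a - a') \<in> y"
    using dpbetweenD(1)[OF u y w between(2)] ab'(2) vec.subspace_add[OF y'(1)] by blast
  then have a: "a \<in> u \<inter> (x \<inter> y)" using ab(2) by simp
  have "b \<in> w \<inter> perp (u \<inter> (x \<inter> y))"
    using isotropic_subset_perp[OF x'(1,2), of "u \<inter> (x \<inter> y)"] ab(3) by blast
  with a show "v \<in> proj (u \<inter> (x \<inter> y)) w" unfolding proj_def ab(1) by (rule set_plus_intro)
qed

lemma eq_proj_if_dpbetween:
  assumes u: "u \<in> dpX TI" and z: "z \<in> dpX TI" and w: "w \<in> dpX TI"
    and between: "dpbetween TI u z w" and A: "vec.subspace A" "A \<subseteq> z" "u \<inter> z \<subseteq> A"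
  shows "z = proj A w"
proof -
  note z' = dpXD[OF z]
  have "TI A" using TI_subset[OF A(2) z'(2)] .
  then have p: "proj A w \<in> dpX TI" by (rule proj_in_dpX[OF A(1) _ w])
  have "z \<subseteq> proj A w"
  proof
    fix v assume "v \<in> z"
    then have "v \<in> (u \<inter> z) + (z \<inter> w)" using dpbetweenD(2)[OF u z w between] by blast
    then obtain a b where ab: "v = a + b" "a \<in> u \<inter> z" "b \<in> z \<inter> w" by (rule set_plus_elim)
    have "a \<in> A" using ab(2) A(3) by blast
    moreover have "b \<in> w \<inter> perp A" using isotropic_subset_perp[OF z'(1,2) A(2)] ab(3) by blast
    ultimately show "v \<in> proj A w" unfolding proj_def ab(1) by (rule set_plus_intro)
  qed
  then show ?thesis
    using vec.subspace_dim_equal[OF z'(1) dpXD(1)[OF p]] z'(3) dpXD(3)[OF p] by simp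
qed

lemma dpbetween_both_set_eq:
  assumes u: "u \<in> dpX TI" and x: "x \<in> dpX TI" and y: "y \<in> dpX TI" and w: "w \<in> dpX TI"
  shows "{z \<in> dpX TI. x \<inter> y \<subseteq> z \<and> dpbetween TI u x z \<and> dpbetween TI u y z \<and> dpbetween TI u z w} =
    (if dpbetween TI u x w \<and> dpbetween TI u y w then {proj (u \<inter> (x \<inter> y)) w} else {})"
proof (cases "dpbetween TI u x w \<and> dpbetween TI u y w")
  case False
  have "\<not> dpbetween TI u z w"
    if "z \<in> dpX TI" "dpbetween TI u x z" "dpbetween TI u y z" for z
    using False dpbetween_trans[OF u x that(1) w that(2)] dpbetween_trans[OF u y that(1) w that(3)]
    by blast
  then have "{z \<in> dpX TI. x \<inter> y \<subseteq> z \<and> dpbetween TI u x z \<and> dpbetween TI u y z \<and> dpbetween TI u z w} = {}"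
    by blast
  then show ?thesis unfolding if_not_P[OF False] .
next
  case True
  define A where "A = u \<inter> (x \<inter> y)"
  have A: "vec.subspace A" "A \<subseteq> u \<inter> x" "A \<subseteq> u \<inter> y"
    unfolding A_def using dpXD(1)[OF u] dpXD(1)[OF x] dpXD(1)[OF y]
    by (auto intro!: vec.subspace_inter)
  have "TI A" using TI_subset[OF _ dpXD(2)[OF u]] A(2) by blast
  then have z: "proj A w \<in> dpX TI" by (rule proj_in_dpX[OF A(1) _ w])
  have "u \<inter> w \<subseteq> A"
    unfolding A_def using dpbetweenD(1)[OF u x w] dpbetweenD(1)[OF u y w] True by blast
  then have "dpbetween TI u (proj A w) w" using A(2) by (intro dpbetween_proj_right[OF u w A(1)]) auto
  moreover have "x \<inter> y \<subseteq> proj A w"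
    unfolding A_def using Int_subset_proj[OF u x y w] True by blast
  moreover have "dpbetween TI u x (proj A w)" "dpbetween TI u y (proj A w)"
    using True dpbetween_proj_left[OF u x w _ A(1,2)] dpbetween_proj_left[OF u y w _ A(1,3)] by blast+
  moreover have "z' = proj A w"
    if "z' \<in> dpX TI" "x \<inter> y \<subseteq> z'" "dpbetween TI u x z'" "dpbetween TI u y z'" "dpbetween TI u z' w"
    for z'
  proof (rule eq_proj_if_dpbetween[OF u that(1) w that(5) A(1)])
    show "A \<subseteq> z'" unfolding A_def using that(2) by blast
    show "u \<inter> z' \<subseteq> A"
      unfolding A_def using dpbetweenD(1)[OF u x that(1,3)] dpbetweenD(1)[OF u y that(1,4)] by blast
  qed
  ultimately have "{z \<in> dpX TI. x \<inter> y \<subseteq> z \<and> dpbetween TI u x z \<and> dpbetween TI u y z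
      \<and> dpbetween TI u z w} = {proj A w}"
    using z by blast
  with True show ?thesis unfolding A_def by simp
qed

lemma dpf_mult_dpf_eq_sum:
  assumes fin: "finite (dpX TI)"
    and u: "u \<in> dpX TI" and x: "x \<in> dpX TI" and y: "y \<in> dpX TI" and w: "w \<in> dpX TI"
  shows "dpf TI u x w * dpf TI u y w =
    (\<Sum>z \<in> {z \<in> dpX TI. x \<inter> y \<subseteq> z \<and> dpf TI u x z = 1 \<and> dpf TI u y z = 1}. dpf TI u z w)"
    (is "_ = (\<Sum>z\<in>?S. _)")
proof -
  have "finite ?S" by (rule finite_subset[OF _ fin]) blast
  have S_between: "?S \<inter> {z. dpbetween TI u z w} =
      {z \<in> dpX TI. x \<inter> y \<subseteq> z \<and> dpbetween TI u x z \<and> dpbetween TI u y z \<and> dpbetween TI u z w}"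
    unfolding dpf_eq_1_iff by blast
  have "(\<Sum>z\<in>?S. dpf TI u z w) = (\<Sum>z\<in>?S. of_bool (dpbetween TI u z w))"
    by (simp only: dpf_eq_of_bool)
  also have "\<dots> = real (card (?S \<inter> {z. dpbetween TI u z w}))"
    using \<open>finite ?S\<close> by simp
  also have "\<dots> = real (card (if dpbetween TI u x w \<and> dpbetween TI u y w
      then {proj (u \<inter> (x \<inter> y)) w} else {}))"
    by (simp only: S_between dpbetween_both_set_eq[OF u x y w])
  finally show ?thesis by (simp add: dpf_eq_of_bool)
qed

end

theorem propositionA5:
  fixes TI :: "('a::{field,finite} ^ 'n::finite) set \<Rightarrow> bool"
    and u0 x y :: "('a ^ 'n) set"
  assumes "polar_isotropy TI"
    and "u0 \<in> dpX TI" and "x \<in> dpX TI" and "y \<in> dpX TI"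
  shows "(\<forall>w \<in> dpX TI. dpf TI u0 x w * dpf TI u0 y w =
            (\<Sum>z \<in> {z \<in> dpX TI. x \<inter> y \<subseteq> z \<and> dpf TI u0 x z = 1 \<and> dpf TI u0 y z = 1}.
               dpf TI u0 z w))
       \<and> (\<lambda>w. dpf TI u0 x w * dpf TI u0 y w)
           \<in> dpHom TI u0 (witt_index TI - vec.dim (u0 \<inter> (x \<inter> y)))"
proof -
  obtain P where "polar_space TI P" using polar_isotropy_polar_space[OF assms(1)] by blast
  then interpret polar_space TI P .
  have fin: "finite (dpX TI)" by (rule finite_subset[OF subset_UNIV]) simp
  have pointwise: "\<forall>w \<in> dpX TI. dpf TI u0 x w * dpf TI u0 y w =
      (\<Sum>z \<in> {z \<in> dpX TI. x \<inter> y \<subseteq> z \<and> dpf TI u0 x z = 1 \<and> dpf TI u0 y z = 1}. dpf TI u0 z w)"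
    using dpf_mult_dpf_eq_sum[OF fin assms(2-4)] by blast
  from pointwise sum_dpf_in_dpHom[OF fin dpf_both_subset_dpshell[OF assms(2-4)] pointwise]
  show ?thesis ..
qed

end
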